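(* For sufficiently large absolute constants $a$ and $b$ the following holds. Let $A$ be a finite multiset of $n$ points in $\mathbb{R}^d$ with mean $\mu$, and $\varepsilon,\delta\in(0,1)$. Let $k=b\log\delta^{-1}$ and for $i=1,\dots,k$ let $\hat\mu_i$ be the average of $a\varepsilon^{-1}$ points drawn independently and uniformly at random from $A$ (all draws independent). Let $r=\frac{1}{11}\sqrt{\frac{\varepsilon\,\mathrm{Opt}}{n}}$ and let $G=\{i:\|\hat\mu_i-\mu\|\le r\}$. Then with probability at least $1-\delta$ the event $\mathcal{E}=\{|G|\ge\frac{7}{10}\,b\log\delta^{-1}\}$ holds.
   Context: $\mu=\frac1n\sum_{p\in A}p$ and $\mathrm{Opt}=\sum_{p\in A}\|p-\mu\|^2$ (Euclidean norm). Integrality of $k$ and $a\varepsilon^{-1}$ is ignored. *)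

theory Defs
  imports "HOL-Probability.Probability"
begin

text \<open>Points of R^d are represented as functions nat => real, only coordinates c < d matter.
  A multiset of n points is an indexed family P 0, ..., P (n-1).\<close>

definition enorm :: "nat \<Rightarrow> (nat \<Rightarrow> real) \<Rightarrow> real" where
  "enorm d x = sqrt (\<Sum>c<d. (x c)\<^sup>2)"

definition vdiff :: "(nat \<Rightarrow> real) \<Rightarrow> (nat \<Rightarrow> real) \<Rightarrow> (nat \<Rightarrow> real)" where
  "vdiff x y = (\<lambda>c. x c - y c)"

definition pmean :: "nat \<Rightarrow> (nat \<Rightarrow> nat \<Rightarrow> real) \<Rightarrow> (nat \<Rightarrow> real)" where
  "pmean n P = (\<lambda>c. (\<Sum>j<n. P j c) / real n)"

definition Opt :: "nat \<Rightarrow> nat \<Rightarrow> (nat \<Rightarrow> nat \<Rightarrow> real) \<Rightarrow> real" where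
  "Opt d n P = (\<Sum>j<n. (enorm d (vdiff (P j) (pmean n P)))\<^sup>2)"

text \<open>Sample space: omega (i,t) is the index of the t-th point drawn for the i-th estimate,
  all draws independent and uniform over {..<n}.\<close>
definition draws :: "nat \<Rightarrow> nat \<Rightarrow> nat \<Rightarrow> (nat \<times> nat \<Rightarrow> nat) pmf" where
  "draws n k m = Pi_pmf ({..<k} \<times> {..<m}) 0 (\<lambda>_. pmf_of_set {..<n})"

definition est :: "(nat \<Rightarrow> nat \<Rightarrow> real) \<Rightarrow> nat \<Rightarrow> (nat \<times> nat \<Rightarrow> nat) \<Rightarrow> nat \<Rightarrow> (nat \<Rightarrow> real)" where
  "est P m \<omega> i = (\<lambda>c. (\<Sum>t<m. P (\<omega> (i, t)) c) / real m)"

definition goodset :: "nat \<Rightarrow> nat \<Rightarrow> (nat \<Rightarrow> nat \<Rightarrow> real) \<Rightarrow> nat \<Rightarrow> nat \<Rightarrow> real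
    \<Rightarrow> (nat \<times> nat \<Rightarrow> nat) \<Rightarrow> nat set" where
  "goodset d n P k m r \<omega> = {i \<in> {..<k}. enorm d (vdiff (est P m \<omega> i) (pmean n P)) \<le> r}"

end

theory Submission
  imports Defs
begin

text \<open>
  Each estimate averages \<open>m \<ge> a / \<epsilon>\<close> independent uniform samples, so its expected squared
  distance from the mean is \<open>Opt / (n m) \<le> 121 r\<^sup>2 / a\<close>, and by Chebyshev it lies outside the
  ball of radius \<open>r\<close> with probability at most \<open>121 / a \<le> (1/4)^10\<close>. If fewer than \<open>7k/10\<close> of
  the \<open>k\<close> independent estimates are good, some set of more than \<open>3k/10\<close> of them fails entirely;
  a union bound over the at most \<open>2^k\<close> such sets bounds this by \<open>2^k (1/4)^(3k) = (1/32)^k \<le> e^-k \<le> \<delta>\<close>.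
\<close>

lemma finite_set_Pi_pmf:
  assumes "finite I" "\<And>i. i \<in> I \<Longrightarrow> finite (set_pmf (p i))"
  shows "finite (set_pmf (Pi_pmf I dflt p))"
  using assms by (auto simp: set_Pi_pmf)

lemma Pi_pmf_Times:
  assumes "finite I" "finite J"
  shows "Pi_pmf (I \<times> J) dflt p =
           map_pmf case_prod (Pi_pmf I (\<lambda>_. dflt) (\<lambda>i. Pi_pmf J dflt (\<lambda>j. p (i, j))))"
    (is "_ = map_pmf case_prod ?N")
proof (rule pmf_eqI)
  fix \<omega> :: "'a \<times> 'b \<Rightarrow> 'c"
  have inj: "inj (case_prod :: ('a \<Rightarrow> 'b \<Rightarrow> 'c) \<Rightarrow> _)"
    by (intro injI) (metis curry_case_prod)
  have "pmf (map_pmf case_prod ?N) \<omega> = pmf ?N (curry \<omega>)"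
    using pmf_map_inj'[OF inj, of _ "curry \<omega>"] by simp
  also have "\<dots> = pmf (Pi_pmf (I \<times> J) dflt p) \<omega>"
  proof (cases "\<forall>x. x \<notin> I \<times> J \<longrightarrow> \<omega> x = dflt")
    case True
    then show ?thesis
      using assms by (auto simp: pmf_Pi fun_eq_iff prod.cartesian_product intro!: prod.cong)
  next
    case False
    then obtain i j where out: "(i, j) \<notin> I \<times> J" "\<omega> (i, j) \<noteq> dflt" by auto
    show ?thesis
    proof (cases "i \<in> I")
      case True
      then show ?thesis using assms out by (auto simp: pmf_Pi fun_eq_iff intro!: prod_zero bexI[of _ i])
    next
      case False
      then show ?thesis using assms out by (auto simp: pmf_Pi fun_eq_iff)
    qed
  qed
  finally show "pmf (Pi_pmf (I \<times> J) dflt p) \<omega> = pmf (map_pmf case_prod ?N) \<omega>"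
    by simp
qed

lemma expectation_Pi_pmf_component:
  fixes u :: "'b \<Rightarrow> real"
  assumes "finite I" "i \<in> I"
  shows "measure_pmf.expectation (Pi_pmf I dflt p) (\<lambda>g. u (g i)) = measure_pmf.expectation (p i) u"
proof -
  have "measure_pmf.expectation (Pi_pmf I dflt p) (\<lambda>g. u (g i))
      = measure_pmf.expectation (map_pmf (\<lambda>g. g i) (Pi_pmf I dflt p)) u"
    by simp
  also have "map_pmf (\<lambda>g. g i) (Pi_pmf I dflt p) = p i"
    using assms by (simp add: Pi_pmf_component)
  finally show ?thesis .
qed

lemma expectation_mult_Pi_pmf_components:
  fixes f h :: "'b \<Rightarrow> real"
  assumes I: "finite I" "\<And>i. i \<in> I \<Longrightarrow> finite (set_pmf (p i))"
    and st: "s \<in> I" "t \<in> I" "s \<noteq> t"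
  shows "measure_pmf.expectation (Pi_pmf I dflt p) (\<lambda>g. f (g s) * h (g t))
           = measure_pmf.expectation (p s) f * measure_pmf.expectation (p t) h"
proof -
  let ?M = "measure_pmf (Pi_pmf I dflt p)"
  define X where "X i g = (if i = s then f else h) (g i)" for i g
  have "prob_space.indep_vars ?M (\<lambda>_. count_space UNIV) (\<lambda>i g. g i) {s, t}"
    using st by (intro prob_space.indep_vars_subset[OF measure_pmf.prob_space_axioms
        indep_vars_Pi_pmf[OF I(1), of dflt p]]) auto
  then have "prob_space.indep_vars ?M (\<lambda>_. borel) X {s, t}"
    unfolding X_def by (rule prob_space.indep_vars_compose2[OF measure_pmf.prob_space_axioms]) simp
  then have "measure_pmf.expectation (Pi_pmf I dflt p) (\<lambda>g. \<Prod>i\<in>{s, t}. X i g)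
      = (\<Prod>i\<in>{s, t}. measure_pmf.expectation (Pi_pmf I dflt p) (X i))"
    by (intro prob_space.indep_vars_lebesgue_integral[OF measure_pmf.prob_space_axioms])
       (auto intro!: integrable_measure_pmf_finite finite_set_Pi_pmf I)
  moreover have "X s = (\<lambda>g. f (g s))" "X t = (\<lambda>g. h (g t))"
    using st by (auto simp: X_def)
  ultimately show ?thesis
    using st I by (simp add: expectation_Pi_pmf_component)
qed

lemma expectation_square_sum_Pi_pmf:
  fixes h :: "'b \<Rightarrow> real"
  assumes I: "finite I" and p: "finite (set_pmf p)" and centred: "measure_pmf.expectation p h = 0"
  shows "measure_pmf.expectation (Pi_pmf I dflt (\<lambda>_. p)) (\<lambda>g. (\<Sum>i\<in>I. h (g i))\<^sup>2)
           = real (card I) * measure_pmf.expectation p (\<lambda>x. (h x)\<^sup>2)"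
proof -
  let ?Q = "Pi_pmf I dflt (\<lambda>_. p)"
  have integrable_Q: "integrable (measure_pmf ?Q) u" for u :: "_ \<Rightarrow> real"
    by (intro integrable_measure_pmf_finite finite_set_Pi_pmf I p)
  have pair: "measure_pmf.expectation ?Q (\<lambda>g. h (g s) * h (g t))
      = (if s = t then measure_pmf.expectation p (\<lambda>x. (h x)\<^sup>2) else 0)" if "s \<in> I" "t \<in> I" for s t
  proof (cases "s = t")
    case True
    then show ?thesis
      using expectation_Pi_pmf_component[OF I that(1), of dflt "\<lambda>_. p" "\<lambda>x. (h x)\<^sup>2"]
      by (simp add: power2_eq_square)
  qed (use expectation_mult_Pi_pmf_components[OF I p] that centred in auto)
  have "measure_pmf.expectation ?Q (\<lambda>g. (\<Sum>i\<in>I. h (g i))\<^sup>2)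
      = (\<Sum>s\<in>I. \<Sum>t\<in>I. measure_pmf.expectation ?Q (\<lambda>g. h (g s) * h (g t)))"
    by (simp add: power2_eq_square sum_product integrable_Q Bochner_Integration.integral_sum)
  also have "\<dots> = real (card I) * measure_pmf.expectation p (\<lambda>x. (h x)\<^sup>2)"
    using I by (simp add: pair if_distrib sum.delta cong: sum.cong)
  finally show ?thesis .
qed

lemma measure_Pi_pmf_all_in:
  assumes "finite I" "S \<subseteq> I"
  shows "measure_pmf.prob (Pi_pmf I dflt (\<lambda>_. Q)) {F. \<forall>i\<in>S. F i \<in> B} = measure_pmf.prob Q B ^ card S"
proof -
  have "{F. \<forall>i\<in>S. F i \<in> B} = Pi I (\<lambda>i. if i \<in> S then B else UNIV)"
    using assms(2) by (auto simp: Pi_def)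
  then have "measure_pmf.prob (Pi_pmf I dflt (\<lambda>_. Q)) {F. \<forall>i\<in>S. F i \<in> B}
      = (\<Prod>i\<in>I. if i \<in> S then measure_pmf.prob Q B else 1)"
    using assms(1) by (simp add: measure_Pi_pmf_Pi if_distrib cong: if_cong)
  also have "\<dots> = measure_pmf.prob Q B ^ card S"
    using assms by (simp add: prod.If_cases Int_absorb1)
  finally show ?thesis .
qed

lemma measure_Pi_pmf_card_ge_le:
  assumes I: "finite I" and B: "measure_pmf.prob Q B \<le> q" and q: "q \<le> 1"
  shows "measure_pmf.prob (Pi_pmf I dflt (\<lambda>_. Q)) {F. s \<le> card {i\<in>I. F i \<in> B}} \<le> 2 ^ card I * q ^ s"
proof -
  let ?M = "Pi_pmf I dflt (\<lambda>_. Q)"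
  define SS where "SS = {S. S \<subseteq> I \<and> s \<le> card S}"
  have "finite SS" "card SS \<le> 2 ^ card I"
    using I card_mono[of "Pow I" SS] by (auto simp: SS_def card_Pow)
  have "0 \<le> q"
    using B measure_nonneg order_trans by blast
  have "{F. s \<le> card {i\<in>I. F i \<in> B}} \<subseteq> (\<Union>S\<in>SS. {F. \<forall>i\<in>S. F i \<in> B})"
  proof
    fix F assume "F \<in> {F. s \<le> card {i\<in>I. F i \<in> B}}"
    then show "F \<in> (\<Union>S\<in>SS. {F. \<forall>i\<in>S. F i \<in> B})"
      by (intro UN_I[of "{i\<in>I. F i \<in> B}"]) (auto simp: SS_def)
  qed
  then have "measure_pmf.prob ?M {F. s \<le> card {i\<in>I. F i \<in> B}}
      \<le> measure_pmf.prob ?M (\<Union>S\<in>SS. {F. \<forall>i\<in>S. F i \<in> B})"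
    by (intro measure_pmf.finite_measure_mono) auto
  also have "\<dots> \<le> (\<Sum>S\<in>SS. measure_pmf.prob ?M {F. \<forall>i\<in>S. F i \<in> B})"
    using \<open>finite SS\<close> by (intro measure_pmf.finite_measure_subadditive_finite) auto
  also have "\<dots> \<le> (\<Sum>S\<in>SS. q ^ s)"
  proof (intro sum_mono)
    fix S assume S: "S \<in> SS"
    then have "measure_pmf.prob Q B ^ card S \<le> q ^ card S"
      using B by (intro power_mono) auto
    also have "\<dots> \<le> q ^ s"
      using S q \<open>0 \<le> q\<close> by (intro power_decreasing) (auto simp: SS_def)
    finally show "measure_pmf.prob ?M {F. \<forall>i\<in>S. F i \<in> B} \<le> q ^ s"
      using S I by (simp add: measure_Pi_pmf_all_in SS_def)
  qed
  also have "\<dots> \<le> 2 ^ card I * q ^ s"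
    using of_nat_mono[OF \<open>card SS \<le> 2 ^ card I\<close>, where 'a = real] \<open>0 \<le> q\<close>
    by (simp add: mult_right_mono)
  finally show ?thesis .
qed

definition sample_mean :: "(nat \<Rightarrow> nat \<Rightarrow> real) \<Rightarrow> nat \<Rightarrow> (nat \<Rightarrow> nat) \<Rightarrow> (nat \<Rightarrow> real)" where
  "sample_mean P m g = (\<lambda>c. (\<Sum>t<m. P (g t) c) / real m)"

lemma est_case_prod: "est P m (case_prod F) i = sample_mean P m (F i)"
  by (simp add: est_def sample_mean_def)

lemma power2_enorm: "(enorm d x)\<^sup>2 = (\<Sum>c<d. (x c)\<^sup>2)"
  unfolding enorm_def by (simp add: sum_nonneg)

lemma Opt_nonneg: "0 \<le> Opt d n P"
  unfolding Opt_def by (simp add: sum_nonneg)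

lemma expectation_sq_dist_sample_mean:
  assumes n: "n \<ge> 1" and m: "m \<ge> 1"
  shows "measure_pmf.expectation (Pi_pmf {..<m} dflt (\<lambda>_. pmf_of_set {..<n}))
           (\<lambda>g. (enorm d (vdiff (sample_mean P m g) (pmean n P)))\<^sup>2) = Opt d n P / (real n * real m)"
proof -
  let ?U = "pmf_of_set {..<n}"
  let ?Q = "Pi_pmf {..<m} dflt (\<lambda>_. ?U)"
  define Y where "Y c j = P j c - pmean n P c" for c j
  have U: "finite (set_pmf ?U)" "measure_pmf.expectation ?U u = (\<Sum>j<n. u j) / real n" for u :: "nat \<Rightarrow> real"
    using n by (auto simp: integral_pmf_of_set lessThan_empty_iff)
  have centred: "measure_pmf.expectation ?U (Y c) = 0" for c
    using n by (simp add: U Y_def pmean_def sum_subtractf)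
  have dist: "(enorm d (vdiff (sample_mean P m g) (pmean n P)))\<^sup>2
      = (\<Sum>c<d. (\<Sum>t<m. Y c (g t))\<^sup>2) / (real m)\<^sup>2" for g
  proof -
    have "vdiff (sample_mean P m g) (pmean n P) c = (\<Sum>t<m. Y c (g t)) / real m" for c
      using m by (simp add: vdiff_def sample_mean_def Y_def sum_subtractf field_simps)
    then show ?thesis
      by (simp add: power2_enorm power_divide flip: sum_divide_distrib)
  qed
  have "measure_pmf.expectation ?Q (\<lambda>g. (enorm d (vdiff (sample_mean P m g) (pmean n P)))\<^sup>2)
      = (\<Sum>c<d. measure_pmf.expectation ?Q (\<lambda>g. (\<Sum>t<m. Y c (g t))\<^sup>2)) / (real m)\<^sup>2"
    unfolding dist
    by (simp add: Bochner_Integration.integral_sum integrable_measure_pmf_finite finite_set_Pi_pmf U)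
  also have "\<dots> = (\<Sum>c<d. real m * measure_pmf.expectation ?U (\<lambda>j. (Y c j)\<^sup>2)) / (real m)\<^sup>2"
    by (simp add: expectation_square_sum_Pi_pmf U(1) centred)
  also have "\<dots> = (\<Sum>c<d. \<Sum>j<n. (Y c j)\<^sup>2) / (real n * real m)"
    using m by (simp add: U power2_eq_square sum_divide_distrib flip: sum_distrib_left)
  also have "\<dots> = Opt d n P / (real n * real m)"
    unfolding Opt_def power2_enorm by (simp add: vdiff_def Y_def sum.swap[of _ "{..<d}"])
  finally show ?thesis .
qed

lemma prob_far_sample_mean_le:
  assumes n: "n \<ge> 1" and m: "m \<ge> 1" and r: "0 < r"
  shows "measure_pmf.prob (Pi_pmf {..<m} dflt (\<lambda>_. pmf_of_set {..<n}))
           {g. r < enorm d (vdiff (sample_mean P m g) (pmean n P))} \<le> Opt d n P / (real n * real m * r\<^sup>2)"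
proof -
  let ?Q = "Pi_pmf {..<m} dflt (\<lambda>_. pmf_of_set {..<n})"
  define X where "X g = (enorm d (vdiff (sample_mean P m g) (pmean n P)))\<^sup>2" for g
  have "{g. r < enorm d (vdiff (sample_mean P m g) (pmean n P))} \<subseteq> {g \<in> space ?Q. r\<^sup>2 \<le> X g}"
    using r by (auto simp: X_def intro!: power_mono)
  then have "measure_pmf.prob ?Q {g. r < enorm d (vdiff (sample_mean P m g) (pmean n P))}
      \<le> measure_pmf.prob ?Q {g \<in> space ?Q. r\<^sup>2 \<le> X g}"
    by (intro measure_pmf.finite_measure_mono) auto
  also have "\<dots> \<le> measure_pmf.expectation ?Q X / r\<^sup>2"
    using n r by (intro integral_Markov_inequality_measure integrable_measure_pmf_finite finite_set_Pi_pmf)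
      (auto simp: X_def lessThan_empty_iff)
  also have "\<dots> = Opt d n P / (real n * real m * r\<^sup>2)"
    unfolding X_def expectation_sq_dist_sample_mean[OF n m] by simp
  finally show ?thesis .
qed

lemma prob_far_sample_mean_eq_0:
  assumes n: "n \<ge> 1" and m: "m \<ge> 1" and Opt: "Opt d n P = 0"
  shows "measure_pmf.prob (Pi_pmf {..<m} dflt (\<lambda>_. pmf_of_set {..<n}))
           {g. 0 < enorm d (vdiff (sample_mean P m g) (pmean n P))} = 0"
proof -
  let ?Q = "Pi_pmf {..<m} dflt (\<lambda>_. pmf_of_set {..<n})"
  have "AE g in ?Q. (enorm d (vdiff (sample_mean P m g) (pmean n P)))\<^sup>2 = 0"
    using n expectation_sq_dist_sample_mean[OF n m, of dflt d P] Opt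
    by (subst integral_nonneg_eq_0_iff_AE[symmetric])
      (auto intro!: integrable_measure_pmf_finite finite_set_Pi_pmf simp: lessThan_empty_iff)
  then have "set_pmf ?Q \<inter> {g. 0 < enorm d (vdiff (sample_mean P m g) (pmean n P))} = {}"
    by (auto simp: AE_measure_pmf_iff)
  then show ?thesis
    by (simp add: measure_pmf_zero_iff)
qed

lemma prob_sample_mean_outside_ball_le:
  assumes n: "n \<ge> 1" and a: "0 < a" and \<epsilon>: "0 < \<epsilon>" and m: "a / \<epsilon> \<le> real m"
  shows "measure_pmf.prob (Pi_pmf {..<m} dflt (\<lambda>_. pmf_of_set {..<n}))
           {g. (1 / 11) * sqrt (\<epsilon> * Opt d n P / real n) < enorm d (vdiff (sample_mean P m g) (pmean n P))}
         \<le> 121 / a"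
proof -
  have m1: "m \<ge> 1"
    using divide_pos_pos[OF a \<epsilon>] m by (cases m) auto
  show ?thesis
  proof (cases "Opt d n P = 0")
    case True
    then show ?thesis
      using prob_far_sample_mean_eq_0[OF n m1] a by simp
  next
    case False
    then have Opt: "0 < Opt d n P"
      using Opt_nonneg[of d n P] by simp
    define r where "r = (1 / 11) * sqrt (\<epsilon> * Opt d n P / real n)"
    have r: "0 < r" "r\<^sup>2 = \<epsilon> * Opt d n P / real n / 121"
      using Opt \<epsilon> n by (auto simp: r_def power_mult_distrib power_divide)
    have "measure_pmf.prob (Pi_pmf {..<m} dflt (\<lambda>_. pmf_of_set {..<n}))
        {g. r < enorm d (vdiff (sample_mean P m g) (pmean n P))} \<le> Opt d n P / (real n * real m * r\<^sup>2)"
      by (rule prob_far_sample_mean_le[OF n m1 r(1)])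
    also have "\<dots> = 121 / (real m * \<epsilon>)"
      using Opt \<epsilon> n m1 by (simp add: r(2) field_simps)
    also have "\<dots> \<le> 121 / a"
      using a \<epsilon> m m1 by (intro divide_left_mono) (auto simp: field_simps)
    finally show ?thesis
      unfolding r_def .
  qed
qed

lemma card_goodset_case_prod:
  "card (goodset d n P k m r (case_prod F))
     = k - card {i\<in>{..<k}. r < enorm d (vdiff (sample_mean P m (F i)) (pmean n P))}"
proof -
  have "goodset d n P k m r (case_prod F)
      = {..<k} - {i\<in>{..<k}. r < enorm d (vdiff (sample_mean P m (F i)) (pmean n P))}"
    by (auto simp: goodset_def est_case_prod)
  then show ?thesis
    by (simp add: card_Diff_subset subset_eq)
qed

lemma two_power_times_quarter_power_le:
  "2 ^ k * ((1 / 4) ^ 10) ^ (3 * k div 10 + 1) \<le> (1 / 32 :: real) ^ k"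
proof -
  have "3 * k \<le> 10 * (3 * k div 10 + 1)"
    by presburger
  then have "((1 / 4 :: real) ^ 10) ^ (3 * k div 10 + 1) \<le> (1 / 4) ^ (3 * k)"
    unfolding power_mult[symmetric] by (rule power_decreasing) auto
  then have "2 ^ k * ((1 / 4) ^ 10) ^ (3 * k div 10 + 1) \<le> 2 ^ k * (1 / 4 :: real) ^ (3 * k)"
    by (rule mult_left_mono) simp
  also have "\<dots> = (2 * (1 / 4) ^ 3) ^ k"
    by (simp only: power_mult power_mult_distrib)
  also have "\<dots> = (1 / 32) ^ k"
    by (rule arg_cong[where f = "\<lambda>x. x ^ k"]) (simp add: power3_eq_cube)
  finally show ?thesis .
qed

lemma prob_many_good_ge:
  assumes bad: "measure_pmf.prob (Pi_pmf {..<m} 0 (\<lambda>_. pmf_of_set {..<n}))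
                 {g. r < enorm d (vdiff (sample_mean P m g) (pmean n P))} \<le> (1 / 4) ^ 10"
  shows "1 - (1 / 32) ^ k \<le> measure_pmf.prob (draws n k m) {\<omega>. 7 * k \<le> 10 * card (goodset d n P k m r \<omega>)}"
proof -
  define B where "B = {g. r < enorm d (vdiff (sample_mean P m g) (pmean n P))}"
  define s where "s = 3 * k div 10 + 1"
  define Few where "Few = {\<omega>. 10 * card (goodset d n P k m r \<omega>) < 7 * k}"
  have "case_prod -` Few \<subseteq> {F. s \<le> card {i\<in>{..<k}. F i \<in> B}}"
    by (auto simp: Few_def B_def s_def card_goodset_case_prod)
  then have "measure_pmf.prob (draws n k m) Few
      \<le> measure_pmf.prob (Pi_pmf {..<k} (\<lambda>_. 0) (\<lambda>_. Pi_pmf {..<m} 0 (\<lambda>_. pmf_of_set {..<n})))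
           {F. s \<le> card {i\<in>{..<k}. F i \<in> B}}"
    unfolding draws_def by (simp add: Pi_pmf_Times measure_pmf.finite_measure_mono)
  also have "\<dots> \<le> 2 ^ card {..<k} * ((1 / 4) ^ 10) ^ s"
    by (rule measure_Pi_pmf_card_ge_le[OF finite_lessThan bad[folded B_def]]) (rule power_le_one, auto)
  also have "\<dots> \<le> (1 / 32) ^ k"
    unfolding s_def card_lessThan by (rule two_power_times_quarter_power_le)
  finally have "measure_pmf.prob (draws n k m) Few \<le> (1 / 32) ^ k" .
  moreover have "{\<omega>. 7 * k \<le> 10 * card (goodset d n P k m r \<omega>)} = UNIV - Few"
    by (auto simp: Few_def)
  ultimately show ?thesis
    using measure_pmf.prob_compl[of Few "draws n k m"] by simp
qed

lemma inverse_32_power_le: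
  assumes "0 < \<delta>" "ln (1 / \<delta>) \<le> real k"
  shows "(1 / 32) ^ k \<le> \<delta>"
proof -
  have "1 / 32 \<le> exp (-1 :: real)"
    using exp_le by (simp add: exp_minus field_simps)
  then have "(1 / 32 :: real) ^ k \<le> exp (-1) ^ k"
    by (rule power_mono) simp
  also have "\<dots> = exp (- real k)"
    by (simp flip: exp_of_nat_mult)
  also have "\<dots> \<le> exp (- ln (1 / \<delta>))"
    using assms(2) by simp
  also have "\<dots> = \<delta>"
    using assms(1) by (simp add: ln_div)
  finally show ?thesis .
qed

theorem lemma3p2:
  shows "\<exists>a0 b0 :: real. \<forall>a \<ge> a0. \<forall>b \<ge> b0.
     \<forall>(d::nat) (n::nat) (P :: nat \<Rightarrow> nat \<Rightarrow> real) (\<epsilon>::real) (\<delta>::real).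
       n \<ge> 1 \<longrightarrow> 0 < \<epsilon> \<longrightarrow> \<epsilon> < 1 \<longrightarrow> 0 < \<delta> \<longrightarrow> \<delta> < 1 \<longrightarrow>
       (let k = nat \<lceil>b * ln (1 / \<delta>)\<rceil>;
            m = nat \<lceil>a / \<epsilon>\<rceil>;
            r = (1 / 11) * sqrt (\<epsilon> * Opt d n P / real n)
        in measure_pmf.prob (draws n k m)
             {\<omega>. real (card (goodset d n P k m r \<omega>)) \<ge> 7 / 10 * b * ln (1 / \<delta>)}
           \<ge> 1 - \<delta>)"
  unfolding Let_def
proof (rule exI[of _ "121 * 4 ^ 10"], rule exI[of _ 1], intro allI impI, goal_cases)
  case (1 a b d n P \<epsilon> \<delta>)
  define L where "L = ln (1 / \<delta>)"
  define k where "k = nat \<lceil>b * L\<rceil>"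
  define m where "m = nat \<lceil>a / \<epsilon>\<rceil>"
  define r where "r = (1 / 11) * sqrt (\<epsilon> * Opt d n P / real n)"
  have L: "0 < L" "b * L \<le> real k" "L \<le> real k"
    using 1 by (auto simp: L_def k_def intro: order_trans[of _ "b * L"])
  have "a / \<epsilon> \<le> real m"
    unfolding m_def by linarith
  then have "measure_pmf.prob (Pi_pmf {..<m} 0 (\<lambda>_. pmf_of_set {..<n}))
      {g. r < enorm d (vdiff (sample_mean P m g) (pmean n P))} \<le> 121 / a"
    unfolding r_def using 1 by (intro prob_sample_mean_outside_ball_le) auto
  also have "\<dots> \<le> (1 / 4) ^ 10"
    using 1 by (simp add: field_simps)
  finally have "1 - (1 / 32) ^ k
      \<le> measure_pmf.prob (draws n k m) {\<omega>. 7 * k \<le> 10 * card (goodset d n P k m r \<omega>)}"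
    by (rule prob_many_good_ge)
  moreover have "(1 / 32) ^ k \<le> \<delta>"
    using 1 L by (intro inverse_32_power_le) (auto simp: L_def)
  moreover have "measure_pmf.prob (draws n k m) {\<omega>. 7 * k \<le> 10 * card (goodset d n P k m r \<omega>)}
      \<le> measure_pmf.prob (draws n k m) {\<omega>. 7 / 10 * b * L \<le> real (card (goodset d n P k m r \<omega>))}"
    using L by (intro measure_pmf.finite_measure_mono) auto
  ultimately have "1 - \<delta>
      \<le> measure_pmf.prob (draws n k m) {\<omega>. 7 / 10 * b * L \<le> real (card (goodset d n P k m r \<omega>))}"
    by linarith
  then show ?case
    unfolding L_def k_def m_def r_def .
qed

end
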